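(* Let $e$ be an idempotent binary relation on a finite set $Q$ (i.e. $e\circ e=e$), let $S=\{s\in Q\mid (s,s)\in e\}$ be its set of fixed points, and let $\Gamma$ be the set of strongly connected components of the restriction of $e$ to $S$ (viewed as a directed graph). Then: (1) for all $p,q\in Q$, $(p,q)\in e$ if and only if there exists $s\in S$ with $(p,s)\in e$ and $(s,q)\in e$; (2) $e=\ell r$, where $\ell=\{(p,\sigma)\in Q\times\Gamma\mid (p,s)\in e\text{ for some }s\in\sigma\}$ and $r=\{(\sigma,q)\in\Gamma\times Q\mid (s,q)\in e\text{ for some }s\in\sigma\}$.
   Context: Relations are composed as follows: for relations $m\subseteq X\times Y$, $n\subseteq Y\times Z$, $mn=\{(x,z)\mid \exists y,\ (x,y)\in m,\ (y,z)\in n\}$. *)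

theory Defs
  imports Main
begin

definition fixpts :: "'a set \<Rightarrow> 'a rel \<Rightarrow> 'a set" where
  "fixpts Q e = {s \<in> Q. (s, s) \<in> e}"

definition restrict_rel :: "'a rel \<Rightarrow> 'a set \<Rightarrow> 'a rel" where
  "restrict_rel e S = e \<inter> (S \<times> S)"

definition sccs :: "'a set \<Rightarrow> 'a rel \<Rightarrow> 'a set set" where
  "sccs V E = V // {(x, y). x \<in> V \<and> y \<in> V \<and> (x, y) \<in> E\<^sup>* \<and> (y, x) \<in> E\<^sup>*}"

end

theory Submission
  imports Defs
begin

text \<open>Every pair \<open>(p, q)\<close> of an idempotent relation \<open>e\<close> can be interpolated:
  \<open>e \<subseteq> e O e\<close>. Hence the set \<open>A\<close> of points lying \<open>e\<close>-between \<open>p\<close> and \<open>q\<close> is nonempty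
  and every element of \<open>A\<close> has an \<open>e\<close>-successor in \<open>A\<close>. If no element of \<open>A\<close> were a
  fixed point, \<open>e\<close> would be a strict order on the finite set \<open>A\<close>, so \<open>A\<close> would have a
  maximal element, which is impossible.
  For (2), one passes from a fixed point to its strongly connected component and back:
  inside a component of fixed points, reachability already implies being related by \<open>e\<close>,
  by transitivity.\<close>

lemma idempotent_rel_factors_through_fixpoint:
  assumes fin: "finite (Domain e)" and idem: "e O e = e" and pq: "(p, q) \<in> e"
  shows "\<exists>s. (s, s) \<in> e \<and> (p, s) \<in> e \<and> (s, q) \<in> e"
proof (rule ccontr)
  assume no_fixpt: "\<nexists>s. (s, s) \<in> e \<and> (p, s) \<in> e \<and> (s, q) \<in> e"
  define A where "A = {x. (p, x) \<in> e \<and> (x, q) \<in> e}"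
  define r where "r = {(y, x). x \<in> A \<and> y \<in> A \<and> (x, y) \<in> e}"
  have "A \<subseteq> Domain e" unfolding A_def by blast
  then have "finite A" using fin by (rule finite_subset)
  moreover have "r \<subseteq> A \<times> A" unfolding r_def by blast
  ultimately have "finite r" using finite_subset by blast
  moreover have "trans r" unfolding r_def trans_def using idem by blast
  then have "acyclic r"
    unfolding acyclic_def trancl_id[OF \<open>trans r\<close>] using no_fixpt by (auto simp: r_def A_def)
  ultimately have "wf r" by (rule finite_acyclic_wf)
  moreover have "A \<noteq> {}" unfolding A_def using pq idem by blast
  ultimately obtain x where x: "x \<in> A" and max: "\<And>y. (y, x) \<in> r \<Longrightarrow> y \<notin> A"
    by (metis ex_in_conv wfE_min)
  from x idem obtain y where "(x, y) \<in> e" "(y, q) \<in> e" unfolding A_def by blast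
  with x idem have "(y, x) \<in> r" "y \<in> A" unfolding r_def A_def by blast+
  with max show False by blast
qed

lemma trans_rtrancl_from_reflexive_point:
  assumes "trans e" and "(s, s) \<in> e" and "(s, t) \<in> e\<^sup>*"
  shows "(s, t) \<in> e"
  using assms by (metis rtranclD trancl_id)

lemma sccs_rtrancl:
  assumes "\<sigma> \<in> sccs V E" and "s \<in> \<sigma>" and "t \<in> \<sigma>"
  shows "s \<in> V" and "(s, t) \<in> E\<^sup>*"
  using assms unfolding sccs_def by (auto elim!: quotientE intro: rtrancl_trans)

lemma sccs_cover:
  assumes "s \<in> V"
  shows "\<exists>\<sigma>\<in>sccs V E. s \<in> \<sigma>"
proof
  show "{(x, y). x \<in> V \<and> y \<in> V \<and> (x, y) \<in> E\<^sup>* \<and> (y, x) \<in> E\<^sup>*} `` {s} \<in> sccs V E"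
    unfolding sccs_def using assms by (rule quotientI)
qed (use assms in blast)

lemma trans_rel_on_scc_of_reflexive_points:
  assumes "trans e" and "\<And>s. s \<in> S \<Longrightarrow> (s, s) \<in> e"
    and "\<sigma> \<in> sccs S (restrict_rel e S)" and "s \<in> \<sigma>" and "t \<in> \<sigma>"
  shows "(s, t) \<in> e"
proof -
  have "s \<in> S" "(s, t) \<in> (restrict_rel e S)\<^sup>*"
    using sccs_rtrancl[OF assms(3-5)] by simp_all
  moreover have "(restrict_rel e S)\<^sup>* \<subseteq> e\<^sup>*"
    by (rule rtrancl_mono) (simp add: restrict_rel_def)
  ultimately show ?thesis
    using trans_rtrancl_from_reflexive_point[OF assms(1)] assms(2) by blast
qed

lemma idempotent_rel_factors_through_fixpts:
  assumes "finite Q" and "e \<subseteq> Q \<times> Q" and "e O e = e" and "(p, q) \<in> e"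
  shows "\<exists>s\<in>fixpts Q e. (p, s) \<in> e \<and> (s, q) \<in> e"
proof -
  have "Domain e \<subseteq> Q" using assms(2) by blast
  then have "finite (Domain e)" using assms(1) by (rule finite_subset)
  then obtain s where s: "(s, s) \<in> e" "(p, s) \<in> e" "(s, q) \<in> e"
    using idempotent_rel_factors_through_fixpoint[OF _ assms(3,4)] by blast
  then have "s \<in> fixpts Q e" using assms(2) unfolding fixpts_def by blast
  with s show ?thesis by blast
qed

theorem mainTheorem6:
  fixes Q :: "'a set" and e :: "'a rel"
  assumes "finite Q" and "e \<subseteq> Q \<times> Q" and "e O e = e"
  defines "S \<equiv> fixpts Q e"
  defines "\<Gamma> \<equiv> sccs S (restrict_rel e S)"
  defines "l \<equiv> {(p, \<sigma>). p \<in> Q \<and> \<sigma> \<in> \<Gamma> \<and> (\<exists>s\<in>\<sigma>. (p, s) \<in> e)}"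
  defines "r \<equiv> {(\<sigma>, q). \<sigma> \<in> \<Gamma> \<and> q \<in> Q \<and> (\<exists>s\<in>\<sigma>. (s, q) \<in> e)}"
  shows "(\<forall>p\<in>Q. \<forall>q\<in>Q. (p, q) \<in> e \<longleftrightarrow> (\<exists>s\<in>S. (p, s) \<in> e \<and> (s, q) \<in> e))
         \<and> e = l O r"
proof -
  note factor = idempotent_rel_factors_through_fixpts[OF assms(1-3), folded S_def]
  have "e \<subseteq> l O r"
  proof safe
    fix p q assume "(p, q) \<in> e"
    moreover obtain s where "s \<in> S" "(p, s) \<in> e" "(s, q) \<in> e" using factor \<open>(p, q) \<in> e\<close> by blast
    moreover obtain \<sigma> where "\<sigma> \<in> \<Gamma>" "s \<in> \<sigma>" using sccs_cover[OF \<open>s \<in> S\<close>] \<Gamma>_def by blast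
    moreover have "p \<in> Q" "q \<in> Q" using \<open>(p, q) \<in> e\<close> assms(2) by blast+
    ultimately have "(p, \<sigma>) \<in> l" "(\<sigma>, q) \<in> r" unfolding l_def r_def by blast+
    then show "(p, q) \<in> l O r" by (rule relcompI)
  qed
  moreover have "l O r \<subseteq> e"
  proof safe
    fix p q \<sigma> assume "(p, \<sigma>) \<in> l" "(\<sigma>, q) \<in> r"
    then obtain s t where "\<sigma> \<in> \<Gamma>" "s \<in> \<sigma>" "t \<in> \<sigma>" "(p, s) \<in> e" "(t, q) \<in> e"
      unfolding l_def r_def by blast
    moreover have "trans e" using assms(3) unfolding trans_def by blast
    moreover have "(s, s) \<in> e" if "s \<in> S" for s using that unfolding S_def fixpts_def by blast
    ultimately have "(s, t) \<in> e"
      using trans_rel_on_scc_of_reflexive_points[of e S \<sigma> s t] unfolding \<Gamma>_def by blast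
    with \<open>(p, s) \<in> e\<close> \<open>(t, q) \<in> e\<close> assms(3) show "(p, q) \<in> e" by blast
  qed
  moreover have "(p, q) \<in> e" if "(p, s) \<in> e" "(s, q) \<in> e" for p q s
    using that assms(3) by blast
  ultimately show ?thesis using factor by blast
qed

end
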